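(* Let $R=DV$ be any decomposition of the boundary matrix of the cone filtration, and let $\omega*\sigma,\omega*\tau$ (with $\sigma,\tau\in K$) form a persistence pair, i.e. $\operatorname{low}R[\omega*\tau]=\omega*\sigma$; set $d=\max\sigma$ and $b=\max\tau$ (so $d>b$). Let $\gamma$ be the restriction of $V[\omega*\tau]$ to cone simplices and let $z=(\partial\gamma)\cap K$ be the restriction of $\partial\gamma$ to base simplices. Then $z$ is supported in $K_{\ge b}$, $\partial z$ is supported in $K_{\ge d}$ (so $[z]\in H(K_{\ge b},K_{\ge d})$), $\tau\in z$, and $\sigma\in\partial z$.
   Context: Coefficients are in a field $\mathbb F$. Let $K$ be a finite $\Delta$-complex in which every simplex $\sigma$ carries an integer interval $T(\sigma)=[\min\sigma,\max\sigma]$ with $\min\sigma<\max\sigma$, such that whenever $\sigma$ is a proper face of $\tau$, $\min\sigma<\min\tau<\max\tau<\max\sigma$; assume the values $\min\sigma$ ($\sigma\in K$) are pairwise distinct and the values $\max\sigma$ are pairwise distinct. Write $K_{\le i}=\{\sigma:\min\sigma\le i\}$, $K_{\ge j}=\{\sigma:\max\sigma\ge j\}$ (subcomplexes), and $K[b,d]=K_{\ge b}\cap K_{\le d}$. The cone $\omega*K$ consists of the simplices of $K$ ("base simplices"), a new vertex $\omega$, and simplices $\omega*\sigma$ for $\sigma\in K$ ("cone simplices"), with $\partial(\omega*\sigma)=\sigma-\omega*\partial\sigma$ (for a vertex $v$, $\partial(\omega*v)=v-\omega$). The cone filtration orders base simplices by increasing $\min$, then $\omega$, then the simplices $\omega*\sigma$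 by decreasing $\max\sigma$. $D$ is the boundary matrix of $\omega*K$ with rows and columns in this order; $R=DV$ denotes a decomposition with $V$ invertible upper-triangular and $R$ reduced (pivots $\operatorname{low}$ — lowest nonzero entries — of nonzero columns in distinct rows). "$\sigma\in c$" means the coefficient of $\sigma$ in chain $c$ is nonzero; a chain is supported in a subcomplex $L$ if all its nonzero coefficients are on simplices of $L$. *)

theory Defs
  imports Main
begin

definition delta_complex :: "'a set \<Rightarrow> ('a \<Rightarrow> nat) \<Rightarrow> ('a \<Rightarrow> nat \<Rightarrow> 'a) \<Rightarrow> bool" where
  "delta_complex K dim fc \<longleftrightarrow> finite K \<and>
     (\<forall>s\<in>K. 0 < dim s \<longrightarrow> (\<forall>i\<le>dim s. fc s i \<in> K \<and> dim (fc s i) = dim s - 1)) \<and>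
     (\<forall>s\<in>K. \<forall>i j. 2 \<le> dim s \<and> i < j \<and> j \<le> dim s \<longrightarrow>
        fc (fc s j) i = fc (fc s i) (j - 1))"

definition facet_rel :: "('a \<Rightarrow> nat) \<Rightarrow> ('a \<Rightarrow> nat \<Rightarrow> 'a) \<Rightarrow> ('a \<times> 'a) set" where
  "facet_rel dim fc = {(r, s). 0 < dim s \<and> (\<exists>i\<le>dim s. r = fc s i)}"

definition proper_face :: "('a \<Rightarrow> nat) \<Rightarrow> ('a \<Rightarrow> nat \<Rightarrow> 'a) \<Rightarrow> 'a \<Rightarrow> 'a \<Rightarrow> bool" where
  "proper_face dim fc r s \<longleftrightarrow> (r, s) \<in> (facet_rel dim fc)\<^sup>+"

definition bcoef :: "('a \<Rightarrow> nat) \<Rightarrow> ('a \<Rightarrow> nat \<Rightarrow> 'a) \<Rightarrow> 'a \<Rightarrow> 'a \<Rightarrow> 'f::field" where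
  "bcoef dim fc r s = (if dim s = 0 then 0 else
      (\<Sum>i\<in>{i. i \<le> dim s \<and> fc s i = r}. (-1) ^ i))"

definition bdry :: "'a set \<Rightarrow> ('a \<Rightarrow> nat) \<Rightarrow> ('a \<Rightarrow> nat \<Rightarrow> 'a) \<Rightarrow> ('a \<Rightarrow> 'f::field) \<Rightarrow> 'a \<Rightarrow> 'f" where
  "bdry K dim fc c r = (\<Sum>s\<in>K. bcoef dim fc r s * c s)"

definition interval_filtration ::
  "'a set \<Rightarrow> ('a \<Rightarrow> nat) \<Rightarrow> ('a \<Rightarrow> nat \<Rightarrow> 'a) \<Rightarrow> ('a \<Rightarrow> int) \<Rightarrow> ('a \<Rightarrow> int) \<Rightarrow> bool" where
  "interval_filtration K dim fc mn mx \<longleftrightarrow>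
     (\<forall>s\<in>K. mn s < mx s) \<and>
     (\<forall>r\<in>K. \<forall>s\<in>K. proper_face dim fc r s \<longrightarrow> mn r < mn s \<and> mn s < mx s \<and> mx s < mx r) \<and>
     inj_on mn K \<and> inj_on mx K"

datatype 'a cone_simplex = Base 'a | Apex | Cone 'a

definition cone_set :: "'a set \<Rightarrow> 'a cone_simplex set" where
  "cone_set K = Base ` K \<union> {Apex} \<union> Cone ` K"

text \<open>Boundary matrix of the cone: cD x y = coefficient of x in the boundary of y, where
  d(w*s) = s - w*(ds), and d(w*v) = v - w for a vertex v.\<close>
fun cD :: "('a \<Rightarrow> nat) \<Rightarrow> ('a \<Rightarrow> nat \<Rightarrow> 'a) \<Rightarrow> 'a cone_simplex \<Rightarrow> 'a cone_simplex \<Rightarrow> 'f::field" where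
  "cD dim fc (Base r) (Base s) = bcoef dim fc r s"
| "cD dim fc _ (Base s) = 0"
| "cD dim fc _ Apex = 0"
| "cD dim fc (Base r) (Cone s) = (if r = s then 1 else 0)"
| "cD dim fc Apex (Cone s) = (if dim s = 0 then -1 else 0)"
| "cD dim fc (Cone r) (Cone s) = - bcoef dim fc r s"

text \<open>Cone filtration order: base simplices by increasing min, then the apex,
  then cone simplices by decreasing max.\<close>
fun clev :: "'a cone_simplex \<Rightarrow> nat" where
  "clev (Base _) = 0" | "clev Apex = 1" | "clev (Cone _) = 2"

fun cval :: "('a \<Rightarrow> int) \<Rightarrow> ('a \<Rightarrow> int) \<Rightarrow> 'a cone_simplex \<Rightarrow> int" where
  "cval mn mx (Base s) = mn s" | "cval mn mx Apex = 0" | "cval mn mx (Cone s) = - mx s"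

definition cless :: "('a \<Rightarrow> int) \<Rightarrow> ('a \<Rightarrow> int) \<Rightarrow> 'a cone_simplex \<Rightarrow> 'a cone_simplex \<Rightarrow> bool" where
  "cless mn mx x y \<longleftrightarrow> clev x < clev y \<or> (clev x = clev y \<and> cval mn mx x < cval mn mx y)"

definition mat_mult :: "'b set \<Rightarrow> ('b \<Rightarrow> 'b \<Rightarrow> 'f::field) \<Rightarrow> ('b \<Rightarrow> 'b \<Rightarrow> 'f) \<Rightarrow> 'b \<Rightarrow> 'b \<Rightarrow> 'f" where
  "mat_mult C A B x y = (\<Sum>z\<in>C. A x z * B z y)"

definition mat_invertible :: "'b set \<Rightarrow> ('b \<Rightarrow> 'b \<Rightarrow> 'f::field) \<Rightarrow> bool" where
  "mat_invertible C V \<longleftrightarrow> (\<exists>W. \<forall>x\<in>C. \<forall>y\<in>C.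
      mat_mult C V W x y = (if x = y then 1 else 0) \<and> mat_mult C W V x y = (if x = y then 1 else 0))"

definition upper_triangular :: "'b set \<Rightarrow> ('b \<Rightarrow> 'b \<Rightarrow> bool) \<Rightarrow> ('b \<Rightarrow> 'b \<Rightarrow> 'f::field) \<Rightarrow> bool" where
  "upper_triangular C lt V \<longleftrightarrow> (\<forall>x\<in>C. \<forall>y\<in>C. lt y x \<longrightarrow> V x y = 0)"

definition is_low :: "'b set \<Rightarrow> ('b \<Rightarrow> 'b \<Rightarrow> bool) \<Rightarrow> ('b \<Rightarrow> 'b \<Rightarrow> 'f::field) \<Rightarrow> 'b \<Rightarrow> 'b \<Rightarrow> bool" where
  "is_low C lt A j x \<longleftrightarrow> x \<in> C \<and> A x j \<noteq> 0 \<and> (\<forall>y\<in>C. lt x y \<longrightarrow> A y j = 0)"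

definition reduced :: "'b set \<Rightarrow> ('b \<Rightarrow> 'b \<Rightarrow> bool) \<Rightarrow> ('b \<Rightarrow> 'b \<Rightarrow> 'f::field) \<Rightarrow> bool" where
  "reduced C lt A \<longleftrightarrow> (\<forall>j1\<in>C. \<forall>j2\<in>C. \<forall>x. j1 \<noteq> j2 \<longrightarrow> is_low C lt A j1 x \<longrightarrow> \<not> is_low C lt A j2 x)"

end

(* Write bd for the boundary. Since bd(w*s) = s - w*(bd s), the base rows of D applied to the
   cone part of V[w*tau] give back that cone part, i.e. z, while its cone rows give -bd z. Upper
   triangularity of V bounds the support of z below by max tau; the pivot condition on
   R[w*tau] = D V[w*tau] bounds the support of bd z below by max sigma and gives sigma in bd z.
   Finally tau is in z because an invertible triangular matrix has nonzero diagonal, and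
   max sigma > max tau because sigma is a proper face of some simplex of z. *)

theory Submission
  imports Defs "HOL-Library.Product_Lexorder"
begin

lemma upper_triangular_right_invertible_diag_nonzero:
  fixes V W :: "'b \<Rightarrow> 'b \<Rightarrow> 'f::field" and f :: "'b \<Rightarrow> 'c::linorder"
  assumes "finite C" and inj: "inj_on f C"
    and up: "upper_triangular C (\<lambda>x y. f x < f y) V"
    and right_inv: "\<forall>x\<in>C. \<forall>y\<in>C. mat_mult C V W x y = (if x = y then 1 else 0)"
    and "x \<in> C"
  shows "V x x \<noteq> 0"
proof -
  have "finite S \<Longrightarrow> S \<subseteq> C \<Longrightarrow> \<forall>x\<in>S. \<forall>y\<in>S. mat_mult S V W x y = (if x = y then 1 else 0)
    \<Longrightarrow> \<forall>x\<in>S. V x x \<noteq> 0" for S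
  proof (induction S rule: finite_ranking_induct[where f = f])
    case (insert m S)
    show ?case
    proof (cases "m \<in> S")
      case True
      then show ?thesis using insert by (simp add: insert_absorb)
    next
      case False
      have S: "finite S" "S \<subseteq> C" "m \<in> C" using insert by auto
      \<comment> \<open>m is the largest element, so row m of V vanishes off the diagonal\<close>
      have row: "V m y = 0" if "y \<in> S" for y
      proof -
        have "f y \<noteq> f m" using inj S that False by (metis inj_on_eq_iff subsetD)
        then have "f y < f m" using insert.hyps(2)[OF that] by simp
        then show ?thesis using up S that unfolding upper_triangular_def by blast
      qed
      have split: "mat_mult (insert m S) V W m y = V m m * W m y" for y
        unfolding mat_mult_def using S False row by (simp add: sum.neutral)
      have Vmm: "V m m \<noteq> 0"
        using split[of m] insert.prems(2) by auto
      have Wrow: "W m y = 0" if "y \<in> S" for y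
      proof -
        have "m \<noteq> y" using that False by blast
        then have "V m m * W m y = 0" using split[of y] insert.prems(2) that by simp
        then show ?thesis using Vmm by simp
      qed
      have "\<forall>x\<in>S. \<forall>y\<in>S. mat_mult S V W x y = (if x = y then 1 else 0)"
      proof (intro ballI)
        fix x y assume xy: "x \<in> S" "y \<in> S"
        have "mat_mult (insert m S) V W x y = V x m * W m y + mat_mult S V W x y"
          unfolding mat_mult_def using S False by simp
        then show "mat_mult S V W x y = (if x = y then 1 else 0)"
          using insert.prems(2) xy Wrow by auto
      qed
      then show ?thesis using insert.IH S Vmm by auto
    qed
  qed simp
  then show ?thesis using \<open>finite C\<close> right_inv \<open>x \<in> C\<close> by blast
qed

lemma cless_Cone_iff [simp]: "cless mn mx (Cone s) (Cone t) \<longleftrightarrow> mx t < mx s"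
  by (simp add: cless_def)

lemma cless_iff_lex: "cless mn mx x y \<longleftrightarrow> (clev x, cval mn mx x) < (clev y, cval mn mx y)"
  by (auto simp: cless_def less_prod_def)

lemma inj_on_lex_cone_set:
  assumes "inj_on mn K" and "inj_on mx K"
  shows "inj_on (\<lambda>x. (clev x, cval mn mx x)) (cone_set K)"
proof (rule inj_onI)
  fix x y assume "x \<in> cone_set K" "y \<in> cone_set K" "(clev x, cval mn mx x) = (clev y, cval mn mx y)"
  then show "x = y"
    using assms by (cases x; cases y) (auto simp: cone_set_def inj_on_def)
qed

lemma finite_cone_set: "finite K \<Longrightarrow> finite (cone_set K)"
  by (simp add: cone_set_def)

lemma Cone_in_cone_set_iff [simp]: "Cone s \<in> cone_set K \<longleftrightarrow> s \<in> K"
  by (auto simp: cone_set_def)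

lemma invertible_upper_triangular_cone_diag_nonzero:
  assumes "finite K" "inj_on mn K" "inj_on mx K"
    and "mat_invertible (cone_set K) V" and "upper_triangular (cone_set K) (cless mn mx) V"
    and "x \<in> cone_set K"
  shows "V x x \<noteq> 0"
proof -
  obtain W where W: "\<forall>x\<in>cone_set K. \<forall>y\<in>cone_set K. mat_mult (cone_set K) V W x y = (if x = y then 1 else 0)"
    using assms(4) unfolding mat_invertible_def by blast
  have "upper_triangular (cone_set K) (\<lambda>x y. (clev x, cval mn mx x) < (clev y, cval mn mx y)) V"
    using assms(5) by (simp add: upper_triangular_def cless_iff_lex)
  from upper_triangular_right_invertible_diag_nonzero[OF finite_cone_set[OF assms(1)]
      inj_on_lex_cone_set[OF assms(2,3)] this W assms(6)]
  show ?thesis .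
qed

lemma bcoef_nonzero_imp_facet:
  assumes cx: "delta_complex K dim fc" and filt: "interval_filtration K dim fc mn mx"
    and "s \<in> K" and nz: "(bcoef dim fc r s :: 'f::field) \<noteq> 0"
  shows "r \<in> K \<and> mx s < mx r"
proof -
  have dim: "dim s \<noteq> 0" using nz unfolding bcoef_def by (auto split: if_splits)
  then obtain i where i: "i \<le> dim s" "fc s i = r"
    using nz unfolding bcoef_def by (metis (mono_tags, lifting) empty_Collect_eq sum.empty)
  have "r \<in> K" using cx \<open>s \<in> K\<close> dim i unfolding delta_complex_def by auto
  moreover have "proper_face dim fc r s"
    using dim i unfolding proper_face_def facet_rel_def by auto
  ultimately show ?thesis using filt \<open>s \<in> K\<close> unfolding interval_filtration_def by blast
qed

lemma bdry_nonzero_obtain_coface: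
  fixes c :: "'a \<Rightarrow> 'f::field"
  assumes "delta_complex K dim fc" and "interval_filtration K dim fc mn mx"
    and "bdry K dim fc c r \<noteq> 0"
  obtains s where "s \<in> K" "c s \<noteq> 0" "r \<in> K" "mx s < mx r"
proof -
  obtain s where "s \<in> K" "bcoef dim fc r s * c s \<noteq> (0::'f)"
    using assms(3) unfolding bdry_def by (meson sum.neutral)
  then show ?thesis using that bcoef_nonzero_imp_facet[OF assms(1,2)] by auto
qed

definition cone_chain :: "'a set \<Rightarrow> ('a cone_simplex \<Rightarrow> 'f::zero) \<Rightarrow> 'a \<Rightarrow> 'f" where
  "cone_chain K v s = (if s \<in> K then v (Cone s) else 0)"

lemma base_row_of_cone_part:
  fixes v :: "'a cone_simplex \<Rightarrow> 'f::field"
  assumes "finite K"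
  shows "(\<Sum>c\<in>cone_set K. cD dim fc (Base r) c * (case c of Cone s \<Rightarrow> v (Cone s) | _ \<Rightarrow> 0))
    = cone_chain K v r"
proof -
  have "(\<Sum>c\<in>cone_set K. cD dim fc (Base r) c * (case c of Cone s \<Rightarrow> v (Cone s) | _ \<Rightarrow> 0))
      = (\<Sum>c\<in>cone_set K. if c = Cone r then v (Cone r) else 0)"
    by (rule sum.cong) (auto split: cone_simplex.split)
  then show ?thesis using assms by (simp add: finite_cone_set cone_chain_def)
qed

lemma cone_row_eq_neg_bdry:
  fixes v :: "'a cone_simplex \<Rightarrow> 'f::field"
  assumes "finite K"
  shows "(\<Sum>c\<in>cone_set K. cD dim fc (Cone r) c * v c) = - bdry K dim fc (cone_chain K v) r"
proof -
  have "(\<Sum>c\<in>cone_set K. cD dim fc (Cone r) c * v c) = (\<Sum>c\<in>Cone ` K. cD dim fc (Cone r) c * v c)"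
  proof (rule sum.mono_neutral_right)
    show "\<forall>c\<in>cone_set K - Cone ` K. cD dim fc (Cone r) c * v c = 0"
      by (auto simp: cone_set_def)
  qed (auto simp: assms finite_cone_set cone_set_def)
  also have "\<dots> = (\<Sum>s\<in>K. - (bcoef dim fc r s * cone_chain K v s))"
    by (simp add: sum.reindex inj_on_def cone_chain_def)
  finally show ?thesis by (simp add: bdry_def sum_negf)
qed

theorem claim6p2:
  fixes K :: "'a set" and dim :: "'a \<Rightarrow> nat" and fc :: "'a \<Rightarrow> nat \<Rightarrow> 'a"
    and mn mx :: "'a \<Rightarrow> int"
    and V R :: "'a cone_simplex \<Rightarrow> 'a cone_simplex \<Rightarrow> 'f::field"
    and \<sigma> \<tau> :: 'a
  assumes cx: "delta_complex K dim fc"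
    and filt: "interval_filtration K dim fc mn mx"
    and RDV: "\<forall>x\<in>cone_set K. \<forall>y\<in>cone_set K. R x y = mat_mult (cone_set K) (cD dim fc) V x y"
    and Vinv: "mat_invertible (cone_set K) V"
    and Vup: "upper_triangular (cone_set K) (cless mn mx) V"
    and Rred: "reduced (cone_set K) (cless mn mx) R"
    and \<sigma>K: "\<sigma> \<in> K" and \<tau>K: "\<tau> \<in> K"
    and pair: "is_low (cone_set K) (cless mn mx) R (Cone \<tau>) (Cone \<sigma>)"
  defines "z \<equiv> (\<lambda>r. \<Sum>c\<in>cone_set K. cD dim fc (Base r) c *
                  (case c of Cone s \<Rightarrow> V (Cone s) (Cone \<tau>) | _ \<Rightarrow> 0))"
    and "d \<equiv> mx \<sigma>" and "b \<equiv> mx \<tau>"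
  shows "d > b
    \<and> (\<forall>r. z r \<noteq> 0 \<longrightarrow> r \<in> K \<and> mx r \<ge> b)
    \<and> (\<forall>r. bdry K dim fc z r \<noteq> 0 \<longrightarrow> r \<in> K \<and> mx r \<ge> d)
    \<and> z \<tau> \<noteq> 0
    \<and> bdry K dim fc z \<sigma> \<noteq> 0"
proof -
  have finK: "finite K" using cx by (simp add: delta_complex_def)
  have inj: "inj_on mn K" "inj_on mx K" using filt by (simp_all add: interval_filtration_def)
  have z_eq: "z = cone_chain K (\<lambda>c. V c (Cone \<tau>))"
    unfolding z_def using base_row_of_cone_part[OF finK, where v = "\<lambda>c. V c (Cone \<tau>)"] by auto
  have R_eq: "R (Cone r) (Cone \<tau>) = - bdry K dim fc z r" if "r \<in> K" for r
    using RDV that \<tau>K finK by (simp add: mat_mult_def z_eq cone_row_eq_neg_bdry)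
  have z_supp: "r \<in> K \<and> mx r \<ge> b" if "z r \<noteq> 0" for r
  proof -
    have "r \<in> K" "V (Cone r) (Cone \<tau>) \<noteq> 0" using that by (auto simp: z_eq cone_chain_def split: if_splits)
    then have "\<not> mx r < mx \<tau>"
      using Vup \<tau>K unfolding upper_triangular_def by (metis Cone_in_cone_set_iff cless_Cone_iff)
    with \<open>r \<in> K\<close> show ?thesis unfolding b_def by simp
  qed
  have bz_supp: "r \<in> K \<and> mx r \<ge> d" if "bdry K dim fc z r \<noteq> 0" for r
  proof -
    have "r \<in> K" using bdry_nonzero_obtain_coface[OF cx filt that] by blast
    then have "R (Cone r) (Cone \<tau>) \<noteq> 0" using R_eq \<open>r \<in> K\<close> that by simp
    then have "\<not> mx r < mx \<sigma>" using pair \<open>r \<in> K\<close> unfolding is_low_def by fastforce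
    with \<open>r \<in> K\<close> show ?thesis unfolding d_def by simp
  qed
  have bz_\<sigma>: "bdry K dim fc z \<sigma> \<noteq> 0" using pair R_eq[OF \<sigma>K] by (simp add: is_low_def)
  obtain s where "z s \<noteq> 0" "mx s < mx \<sigma>"
    using bdry_nonzero_obtain_coface[OF cx filt bz_\<sigma>] by blast
  then have "d > b" using z_supp unfolding d_def by fastforce
  moreover have "z \<tau> \<noteq> 0"
    using invertible_upper_triangular_cone_diag_nonzero[OF finK inj Vinv Vup] \<tau>K
    by (simp add: z_eq cone_chain_def)
  ultimately show ?thesis using z_supp bz_supp bz_\<sigma> by blast
qed

end
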